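(* Let $\eta,\tau>0$ and $\nu\in\mathbb{R}$. For $\mu\in\mathbb{R}$ let $p_\mu(z)=\tau+(2\eta+2\mu-\tau)z+(2\eta-2\mu-\tau)z^2+\tau z^3$. Suppose $p_{\nu}$ has a root $\Omega_+$ in the open upper half-plane $\{\Im z>0\}$. Then $p_{-\nu}$ has exactly one root $\Omega_-$ in the open upper half-plane, and $\overline{\Omega_+}\,\Omega_-=1$.
   Context: $p_\mu$ is the numerator of $\partial_z G(\mu,\eta,\tau,z)=p_\mu(z)/(2z^2(z-1))$ for $G(\mu,\eta,\tau,z)=\tau\frac{z+z^{-1}}{2}+\eta\log\big(\frac{z+z^{-1}}{2}-1\big)-\mu\log z$; in the paper $\Omega(\mu,\eta,\tau)$ denotes the root of $p_\mu$ in the upper half-plane, and $\Omega_\pm=\Omega(\pm\nu,\eta,\tau)$. *)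

theory Defs
  imports "HOL-Analysis.Analysis"
begin

definition p_mu :: "real \<Rightarrow> real \<Rightarrow> real \<Rightarrow> complex \<Rightarrow> complex" where
  "p_mu \<mu> \<eta> \<tau> z = complex_of_real \<tau>
     + complex_of_real (2*\<eta> + 2*\<mu> - \<tau>) * z
     + complex_of_real (2*\<eta> - 2*\<mu> - \<tau>) * z^2
     + complex_of_real \<tau> * z^3"

end

theory Submission
  imports Defs
begin

text \<open>The map \<open>z \<mapsto> 1 / cnj z\<close> sends roots of \<open>p_\<nu>\<close> in the upper half-plane to roots of
  \<open>p_{-\<nu>}\<close> in the upper half-plane: conjugation preserves roots because the coefficients are
  real, and inversion exchanges \<open>p_\<nu>\<close> and \<open>p_{-\<nu>}\<close> because \<open>z\<^sup>3 p_{-\<nu>}(1/z) = p_\<nu>(z)\<close>.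
  Uniqueness holds for any real cubic: together with a root \<open>w\<close> in the upper half-plane,
  \<open>cnj w\<close> is a root, so by Vieta's formula the third root is real, the sum of all
  three roots being real.\<close>

lemma cubic_factor_two_roots:
  fixes k l m n w y x :: "'a::field"
  assumes "k + l*w + m*w^2 + n*w^3 = 0" "k + l*y + m*y^2 + n*y^3 = 0" "y \<noteq> w"
  shows "k + l*x + m*x^2 + n*x^3 = (x - w) * (x - y) * (m + n*(x + w + y))"
proof -
  have "(y - w) * (l + m*(y + w) + n*(y^2 + y*w + w^2)) =
        (k + l*y + m*y^2 + n*y^3) - (k + l*w + m*w^2 + n*w^3)"
    by (simp add: algebra_simps power2_eq_square power3_eq_cube)
  then have quotient_root: "l + m*(y + w) + n*(y^2 + y*w + w^2) = 0"
    using assms by simp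
  have "k + l*x + m*x^2 + n*x^3 = (k + l*x + m*x^2 + n*x^3) - (k + l*w + m*w^2 + n*w^3)"
    using assms(1) by simp
  also have "\<dots> = (x - w) * (l + m*(x + w) + n*(x^2 + x*w + w^2))"
    by (simp add: algebra_simps power2_eq_square power3_eq_cube)
  also have "\<dots> = (x - w) * ((l + m*(x + w) + n*(x^2 + x*w + w^2))
                             - (l + m*(y + w) + n*(y^2 + y*w + w^2)))"
    using quotient_root by simp
  also have "\<dots> = (x - w) * (x - y) * (m + n*(x + w + y))"
    by (simp add: algebra_simps power2_eq_square)
  finally show ?thesis .
qed

lemma real_cubic_root_upper_half_plane_unique:
  fixes a b c d :: real and u w :: complex
  defines "q \<equiv> \<lambda>z. of_real a + of_real b * z + of_real c * z^2 + of_real d * z^3"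
  assumes "d \<noteq> 0"
    and "Im u > 0" "q u = 0"
    and "Im w > 0" "q w = 0"
  shows "u = w"
proof (rule ccontr)
  assume "u \<noteq> w"
  have "q (cnj w) = cnj (q w)"
    unfolding q_def by simp
  then have conj_root: "q (cnj w) = 0"
    using \<open>q w = 0\<close> by simp
  have "cnj w \<noteq> w" "u \<noteq> cnj w"
    using \<open>Im w > 0\<close> \<open>Im u > 0\<close> by (auto simp: complex_eq_iff)
  then have "q u = (u - w) * (u - cnj w) * (of_real c + of_real d * (u + w + cnj w))"
    using cubic_factor_two_roots[where w = w and y = "cnj w" and x = u] \<open>q w = 0\<close> conj_root
    unfolding q_def by simp
  then have "of_real c + of_real d * (u + w + cnj w) = 0"
    using \<open>q u = 0\<close> \<open>u \<noteq> w\<close> \<open>u \<noteq> cnj w\<close> by simp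
  then have "Im (of_real c + of_real d * (u + w + cnj w)) = 0"
    by simp
  then have "d * Im u = 0"
    by simp
  then show False
    using \<open>d \<noteq> 0\<close> \<open>Im u > 0\<close> by simp
qed

lemma p_mu_cnj: "p_mu \<mu> \<eta> \<tau> (cnj z) = cnj (p_mu \<mu> \<eta> \<tau> z)"
  unfolding p_mu_def by simp

lemma p_mu_inverse:
  assumes "z \<noteq> 0"
  shows "z^3 * p_mu (-\<mu>) \<eta> \<tau> (1 / z) = p_mu \<mu> \<eta> \<tau> z"
  unfolding p_mu_def using assms
  by (simp add: field_simps power3_eq_cube power2_eq_square)

lemma Im_inverse_cnj_pos:
  assumes "Im z > 0"
  shows "Im (1 / cnj z) > 0"
proof -
  have "Re z * Re z + Im z * Im z > 0"
    using assms by (simp add: add_nonneg_pos)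
  then show ?thesis
    using assms by (simp add: Im_divide power2_eq_square)
qed

theorem lemma3p3:
  fixes \<eta> \<tau> \<nu> :: real and \<Omega>p :: complex
  assumes "\<eta> > 0" and "\<tau> > 0"
    and "Im \<Omega>p > 0" and "p_mu \<nu> \<eta> \<tau> \<Omega>p = 0"
  shows "(\<exists>!\<Omega>m. Im \<Omega>m > 0 \<and> p_mu (-\<nu>) \<eta> \<tau> \<Omega>m = 0) \<and>
    (\<forall>\<Omega>m. Im \<Omega>m > 0 \<and> p_mu (-\<nu>) \<eta> \<tau> \<Omega>m = 0 \<longrightarrow> cnj \<Omega>p * \<Omega>m = 1)"
proof -
  define w where "w = 1 / cnj \<Omega>p"
  have "cnj \<Omega>p \<noteq> 0"
    using assms(3) by (auto simp: complex_eq_iff)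
  then have root: "p_mu (-\<nu>) \<eta> \<tau> w = 0"
    using p_mu_inverse[of "cnj \<Omega>p" \<nu> \<eta> \<tau>] p_mu_cnj[of \<nu> \<eta> \<tau> \<Omega>p] assms(4)
    unfolding w_def by simp
  have upper: "Im w > 0"
    using Im_inverse_cnj_pos[OF assms(3)] unfolding w_def .
  have unique: "u = w" if "Im u > 0" "p_mu (-\<nu>) \<eta> \<tau> u = 0" for u
    using real_cubic_root_upper_half_plane_unique[where a = \<tau> and b = "2*\<eta> - 2*\<nu> - \<tau>"
        and c = "2*\<eta> + 2*\<nu> - \<tau>" and d = \<tau> and u = u and w = w] that root upper assms(2)
    unfolding p_mu_def by simp
  have "cnj \<Omega>p * w = 1"
    using \<open>cnj \<Omega>p \<noteq> 0\<close> unfolding w_def by simp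
  then show ?thesis
    using unique upper root by blast
qed

end
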